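(* Consider the Nested Logit model with outside option described in the context. For each $S \in \mathcal{S} \cup \{[n]\}$, suppose $m$ independent choices are sampled from the distribution $\phi(\cdot, S)$ on $S \cup \{0\}$ (independently across assortments), and let $\hat\phi(i,S)$ be the empirical frequency with which $i \in S \cup \{0\}$ is chosen among these $m$ samples. Let $\rho, \Delta, \delta \in (0,1)$ be such that $\phi(i,[n]) \ge \rho$ for all $i \in [n] \cup \{0\}$ and $\left|\frac{\phi(i,S)}{\phi(i,S)+\phi(j,S)} - \frac{\phi(i,[n])}{\phi(i,[n])+\phi(j,[n])}\right| \ge \Delta$ for all $S \in \mathcal{S}$ and $i,j \in S \cup \{0\}$ with $\mathsf{BF}(i,S) \neq \mathsf{BF}(j,S)$. Let $K = (|\mathcal{S}|+1)\left(n+1+\binom{n+1}{2}\right)$. There is an absolute numerical constant $C$ such that, if $m \ge 3C^2 \frac{\log(2K/\delta)}{\rho \Delta^2}$, then with probability at least $1-\delta$, for all $S \in \mathcal{S}$ and all $i,j \in S \cup \{0\}$: $|z(i \succ j, S)| \le 8\sqrt{3\log(2K/\delta)}$ if and only if $\mathsf{BF}(i,S) = \mathsf{BF}(j,S)$.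
   Context: Items: $[n]=\{1,\dots,n\}$ with $n\ge 2$. Experiment design: fix an integer base $b \ge 2$, let $L = \lceil \log_b n \rceil$, fix an injective map $\sigma: [n] \to \{0,\dots,b-1\}^L$ with coordinates $\sigma_\ell(i)$, let $S_{\ell,-d} = \{i \in [n] : \sigma_\ell(i) \neq d\}$ for $\ell \in \{1,\dots,L\}$, $d \in \{0,\dots,b-1\}$, and $\mathcal{S} = \{S_{\ell,-d}\}_{\ell,d}$; the control assortment $[n]$ is also offered. Nested Logit model with outside option: $\mathcal{N}$ is a partition of $[n]$ into nests, $N(i)$ the nest containing $i$; weights $v_i > 0$; parameters $\lambda_N \in [0,1]$, with an extra weight $v_N>0$ when $\lambda_N=0$. $v_N(S) = (\sum_{i \in N \cap S} v_i)^{\lambda_N}$ if $\lambda_N \in (0,1]$, $v_N(S) = v_N \mathbf{1}(N \cap S \neq \emptyset)$ if $\lambda_N = 0$. For $i \in S$, $\phi(i,S) = \frac{v_{N(i)}(S)}{1 + \sum_{N} v_N(S)} \cdot \frac{v_i}{\sum_{j \in N(i) \cap S} v_j}$, and $\phi(0,S) = \frac{1}{1 + \sum_{N} v_N(S)}$. Boost factor: $\mathsf{BF}(i,S) = \phi(i,S)/\phi(i,[n])$ for $i \in S \cup \{0\}$. Test statistic: writing $a = \hat\phi(i,S)$, $c = \hat\phi(j,S)$, $a' = \hat\phi(i,[n])$, $c' = \hat\phi(j,[n])$, $z(i \succ j, S) = \dfrac{\frac{a}{a+c} - \frac{a'}{a'+c'}}{\sqrt{\frac{a+a'}{a+c+a'+c'}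 \cdot \frac{c+c'}{a+c+a'+c'} \cdot \left(\frac{1/m}{a+c} + \frac{1/m}{a'+c'}\right)}}$. *)

theory Defs
  imports "HOL-Probability.Probability"
begin

definition num_levels :: "nat \<Rightarrow> nat \<Rightarrow> nat" where
  "num_levels b n = nat \<lceil>log (real b) (real n)\<rceil>"

text \<open>code i is the base-b code of item i, a list of length L with entries in {0..b-1};
  the coordinate sigma_l(i) (l in {1..L}) is code i ! (l - 1).\<close>
definition coord :: "(nat \<Rightarrow> nat list) \<Rightarrow> nat \<Rightarrow> nat \<Rightarrow> nat" where
  "coord code l i = code i ! (l - 1)"

definition S_minus :: "nat \<Rightarrow> (nat \<Rightarrow> nat list) \<Rightarrow> nat \<Rightarrow> nat \<Rightarrow> nat set" where
  "S_minus n code l d = {i \<in> {1..n}. coord code l i \<noteq> d}"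

definition design :: "nat \<Rightarrow> nat \<Rightarrow> (nat \<Rightarrow> nat list) \<Rightarrow> nat set set" where
  "design n b code =
     {S. \<exists>l \<in> {1..num_levels b n}. \<exists>d < b. S = S_minus n code l d}"

section \<open>Nested Logit model with outside option (items 1..n, outside option 0)\<close>

definition is_partition :: "nat set set \<Rightarrow> nat set \<Rightarrow> bool" where
  "is_partition Ns U \<longleftrightarrow> (\<forall>N\<in>Ns. N \<noteq> {}) \<and> \<Union>Ns = U \<and>
     (\<forall>N\<in>Ns. \<forall>N'\<in>Ns. N \<noteq> N' \<longrightarrow> N \<inter> N' = {})"

definition nest_of :: "nat set set \<Rightarrow> nat \<Rightarrow> nat set" where
  "nest_of Ns i = (THE N. N \<in> Ns \<and> i \<in> N)"

text \<open>v_N(S); w N is the extra weight v_N used when lambda_N = 0.\<close>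
definition nest_val ::
  "(nat \<Rightarrow> real) \<Rightarrow> (nat set \<Rightarrow> real) \<Rightarrow> (nat set \<Rightarrow> real) \<Rightarrow> nat set \<Rightarrow> nat set \<Rightarrow> real" where
  "nest_val v lam w N S =
     (if lam N = 0 then (if N \<inter> S \<noteq> {} then w N else 0)
      else (\<Sum>i\<in>N \<inter> S. v i) powr lam N)"

definition nl_phi ::
  "nat set set \<Rightarrow> (nat \<Rightarrow> real) \<Rightarrow> (nat set \<Rightarrow> real) \<Rightarrow> (nat set \<Rightarrow> real) \<Rightarrow> nat \<Rightarrow> nat set \<Rightarrow> real" where
  "nl_phi Ns v lam w i S =
     (let D = 1 + (\<Sum>N\<in>Ns. nest_val v lam w N S) in
      if i = 0 then 1 / D
      else if i \<in> S then
        nest_val v lam w (nest_of Ns i) S / D * (v i / (\<Sum>j \<in> nest_of Ns i \<inter> S. v j))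
      else 0)"

definition boost ::
  "nat \<Rightarrow> nat set set \<Rightarrow> (nat \<Rightarrow> real) \<Rightarrow> (nat set \<Rightarrow> real) \<Rightarrow> (nat set \<Rightarrow> real) \<Rightarrow> nat \<Rightarrow> nat set \<Rightarrow> real" where
  "boost n Ns v lam w i S = nl_phi Ns v lam w i S / nl_phi Ns v lam w i {1..n}"

definition choice_pmf ::
  "nat set set \<Rightarrow> (nat \<Rightarrow> real) \<Rightarrow> (nat set \<Rightarrow> real) \<Rightarrow> (nat set \<Rightarrow> real) \<Rightarrow> nat set \<Rightarrow> nat pmf" where
  "choice_pmf Ns v lam w S = embed_pmf (\<lambda>i. nl_phi Ns v lam w i S)"

definition sample_pmf ::
  "nat set set \<Rightarrow> nat \<Rightarrow> nat set set \<Rightarrow> (nat \<Rightarrow> real) \<Rightarrow> (nat set \<Rightarrow> real) \<Rightarrow> (nat set \<Rightarrow> real)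
     \<Rightarrow> (nat set \<times> nat \<Rightarrow> nat) pmf" where
  "sample_pmf A m Ns v lam w =
     Pi_pmf (A \<times> {..<m}) 0 (\<lambda>(S, k). choice_pmf Ns v lam w S)"

definition emp_freq :: "nat \<Rightarrow> (nat set \<times> nat \<Rightarrow> nat) \<Rightarrow> nat \<Rightarrow> nat set \<Rightarrow> real" where
  "emp_freq m \<omega> i S = real (card {k \<in> {..<m}. \<omega> (S, k) = i}) / real m"

definition zstat :: "nat \<Rightarrow> real \<Rightarrow> real \<Rightarrow> real \<Rightarrow> real \<Rightarrow> real" where
  "zstat m a c a' c' =
     (a / (a + c) - a' / (a' + c')) /
     sqrt ((a + a') / (a + c + a' + c') * ((c + c') / (a + c + a' + c')) *
           ((1 / real m) / (a + c) + (1 / real m) / (a' + c')))"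

definition z_test :: "nat \<Rightarrow> nat \<Rightarrow> (nat set \<times> nat \<Rightarrow> nat) \<Rightarrow> nat \<Rightarrow> nat \<Rightarrow> nat set \<Rightarrow> real" where
  "z_test n m \<omega> i j S =
     zstat m (emp_freq m \<omega> i S) (emp_freq m \<omega> j S)
             (emp_freq m \<omega> i {1..n}) (emp_freq m \<omega> j {1..n})"

end

theory Submission
  imports Defs
begin

(* Each empirical frequency is a binomial proportion. A multiplicative Chernoff bound and a union
   bound over the at most K pairs (S, i) show that with probability at least 1 - delta every
   frequency satisfies (hat phi - phi)^2 <= E phi, where E = 8 ln (2K/delta) / m.
   Removing items can only raise a nested logit choice probability, so all phi(i,S) are at
   least rho, and the sample size gives 300 E <= 8 rho Delta^2.
   BF(i,S) = BF(j,S) holds exactly when the conditional proportion phi(i,.) / (phi(i,.) + phi(j,.))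
   is the same in S and in [n]. On the good event, the squared numerator of z is at most
   24 E times the pooled variance when these proportions agree, and exceeds it when they differ
   by at least Delta. Since (8 sqrt (3 L))^2 = 24 (8 L), this comparison is exactly the test
   |z| <= 8 sqrt (3 L) with L = ln (2K/delta); the constant is C = 10. *)

section \<open>Binomial counts and a multiplicative Chernoff bound\<close>

lemma exp_le_one_plus_quadratic:
  fixes x :: real
  assumes "x \<le> 1/2"
  shows "exp x \<le> 1 + x + 2 * x\<^sup>2"
proof -
  have pos: "0 < 1 - x" using assms by simp
  have "exp x = 1 / exp (-x)" by (simp add: exp_minus field_simps)
  also have "\<dots> \<le> 1 / (1 - x)"
    using exp_ge_add_one_self[of "-x"] pos by (intro divide_left_mono) auto
  also have "\<dots> \<le> 1 + x + 2 * x\<^sup>2"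
  proof -
    have "(1 + x + 2 * x\<^sup>2) * (1 - x) = 1 + x\<^sup>2 * (1 - 2 * x)"
      by (simp add: algebra_simps power2_eq_square)
    moreover have "0 \<le> x\<^sup>2 * (1 - 2 * x)" using assms by simp
    ultimately show ?thesis using pos by (simp add: field_simps)
  qed
  finally show ?thesis .
qed

lemma prob_binomial_pmf_tail_le_mgf:
  fixes p s x :: real
  assumes p: "p \<in> {0..1}"
  shows "measure_pmf.prob (binomial_pmf m p) {k. s * x \<le> s * real k}
           \<le> exp (- s * x + real m * p * (exp s - 1))"
proof -
  let ?M = "binomial_pmf m p" and ?B = "{k. s * x \<le> s * real k}"
  have "set_pmf ?M \<subseteq> {..m}"
    using p by (auto simp: set_pmf_binomial_eq split: if_splits)
  then have "measure_pmf.prob ?M ?B \<le> measure_pmf.prob ?M (?B \<inter> {..m})"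
    by (subst measure_Int_set_pmf[symmetric]) (intro measure_pmf.finite_measure_mono, auto)
  also have "\<dots> = (\<Sum>k\<in>?B \<inter> {..m}. pmf ?M k)"
    by (simp add: measure_measure_pmf_finite)
  also have "\<dots> \<le> (\<Sum>k\<in>?B \<inter> {..m}. pmf ?M k * exp (s * real k - s * x))"
    by (intro sum_mono) (simp add: mult_le_cancel_left1)
  also have "\<dots> \<le> (\<Sum>k\<le>m. pmf ?M k * exp (s * real k - s * x))"
    by (intro sum_mono2) auto
  also have "\<dots> = exp (- s * x) * (\<Sum>k\<le>m. real (m choose k) * (p * exp s) ^ k * (1 - p) ^ (m - k))"
    using p by (simp add: sum_distrib_left exp_diff exp_minus power_mult_distrib
        exp_of_nat_mult[symmetric] field_simps mult_exp_exp)
  also have "\<dots> = exp (- s * x) * (p * exp s + (1 - p)) ^ m"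
    by (simp add: binomial_ring atLeast0AtMost)
  also have "\<dots> \<le> exp (- s * x) * exp (p * (exp s - 1)) ^ m"
  proof (intro mult_left_mono power_mono)
    show "p * exp s + (1 - p) \<le> exp (p * (exp s - 1))"
      using exp_ge_add_one_self[of "p * (exp s - 1)"] by (simp add: algebra_simps)
  qed (use p in auto)
  also have "\<dots> = exp (- s * x + real m * p * (exp s - 1))"
    by (simp add: mult_exp_exp exp_of_nat_mult[symmetric] mult.assoc)
  finally show ?thesis .
qed

lemma prob_binomial_pmf_tail_le:
  fixes p s x :: real
  assumes p: "p \<in> {0..1}" and s: "\<bar>s\<bar> \<le> 1/2"
  shows "measure_pmf.prob (binomial_pmf m p) {k. s * x \<le> s * real k}
           \<le> exp (- s * x + real m * p * (s + 2 * s\<^sup>2))"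
proof -
  have "exp s \<le> 1 + s + 2 * s\<^sup>2"
    using s by (intro exp_le_one_plus_quadratic) auto
  then have "real m * p * (exp s - 1) \<le> real m * p * (s + 2 * s\<^sup>2)"
    using p by (intro mult_left_mono) auto
  then show ?thesis
    using prob_binomial_pmf_tail_le_mgf[OF p, of m s x] by (simp add: order_trans)
qed

text \<open>Hoeffding's inequality from
  HOL-Probability would lose a factor \<open>p\<close> in the exponent, which the sample size
  \<open>m \<sim> 1 / (\<rho> \<Delta>\<^sup>2)\<close> cannot afford.\<close>
lemma prob_binomial_pmf_relative_deviation:
  fixes p E :: real
  assumes p: "0 < p" "p \<le> 1" and E: "0 \<le> E" "E \<le> 4 * p"
  shows "measure_pmf.prob (binomial_pmf m p) {k. (real k / real m - p)\<^sup>2 > E * p}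
           \<le> 2 * exp (- (real m * E / 8))"
proof (cases "m = 0")
  case True
  then show ?thesis by simp
next
  case False
  define t where "t = sqrt (E / p)"
  have t: "0 \<le> t" "t \<le> 2" "E = p * t\<^sup>2"
    using E p real_sqrt_le_mono[of "E / p" 4] by (auto simp: t_def field_simps)
  let ?M = "binomial_pmf m p"
  define tail where "tail \<sigma> = {k. \<sigma> * t / 4 * (real m * p * (1 + \<sigma> * t)) \<le> \<sigma> * t / 4 * real k}"
    for \<sigma> :: real
  have tail_le: "measure_pmf.prob ?M (tail \<sigma>) \<le> exp (- (real m * p * t\<^sup>2 / 8))"
    if "\<sigma> \<in> {-1, 1}" for \<sigma>
  proof -
    have "measure_pmf.prob ?M (tail \<sigma>)
        \<le> exp (- (\<sigma> * t / 4) * (real m * p * (1 + \<sigma> * t))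
                + real m * p * (\<sigma> * t / 4 + 2 * (\<sigma> * t / 4)\<^sup>2))"
      unfolding tail_def using p t that by (intro prob_binomial_pmf_tail_le) auto
    also have "\<dots> = exp (- (real m * p * t\<^sup>2 / 8))"
      using that by (auto simp: algebra_simps power2_eq_square)
    finally show ?thesis .
  qed
  have "{k. (real k / real m - p)\<^sup>2 > E * p} \<subseteq> tail 1 \<union> tail (-1)"
  proof
    fix k assume "k \<in> {k. (real k / real m - p)\<^sup>2 > E * p}"
    then have "(t * p)\<^sup>2 < \<bar>real k / real m - p\<bar>\<^sup>2"
      by (simp add: t(3) power2_eq_square mult_ac)
    then have "t * p < \<bar>real k / real m - p\<bar>"
      using power2_less_imp_less by fastforce
    then have "real m * p * (1 + t) \<le> real k \<or> real k \<le> real m * p * (1 - t)"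
      using False by (auto simp: abs_if field_simps split: if_splits)
    then show "k \<in> tail 1 \<union> tail (-1)"
      using t by (auto simp: tail_def intro: mult_left_mono)
  qed
  then have "measure_pmf.prob ?M {k. (real k / real m - p)\<^sup>2 > E * p}
      \<le> measure_pmf.prob ?M (tail 1) + measure_pmf.prob ?M (tail (-1))"
    by (intro measure_pmf.finite_measure_mono order_trans[OF _ measure_Un_le]) auto
  also have "\<dots> \<le> 2 * exp (- (real m * p * t\<^sup>2 / 8))"
    using tail_le[of 1] tail_le[of "-1"] by simp
  finally show ?thesis by (simp add: t(3) mult_ac)
qed

lemma map_pmf_eq_bernoulli_pmf:
  "map_pmf (\<lambda>y. y = i) M = bernoulli_pmf (pmf M i)"
proof (rule pmf_eqI)
  fix b :: bool
  have "pmf (map_pmf (\<lambda>y. y = i) M) b = measure_pmf.prob M (if b then {i} else - {i})"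
    by (auto simp: pmf_map intro!: arg_cong[where f = "measure_pmf.prob M"])
  then show "pmf (map_pmf (\<lambda>y. y = i) M) b = pmf (bernoulli_pmf (pmf M i)) b"
    using measure_pmf.prob_compl[of "{i}" M]
    by (simp add: Compl_eq_Diff_UNIV measure_pmf_single pmf_le_1)
qed

lemma Pi_pmf_count_eq_binomial_pmf:
  fixes F :: "'a \<Rightarrow> 'b pmf"
  assumes "finite A" and "S \<in> A"
  shows "map_pmf (\<lambda>\<omega>. card {k\<in>{..<m}. \<omega> (S, k) = i}) (Pi_pmf (A \<times> {..<m}) dflt (\<lambda>(S, k). F S))
         = binomial_pmf m (pmf (F S) i)"
proof -
  let ?J = "{S} \<times> {..<m}" and ?G = "\<lambda>(S, k). F S"
  have count_J: "card {k\<in>{..<m}. \<omega> (S, k) = i}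
      = card {x\<in>?J. (if x \<in> ?J then \<omega> x else dflt) = i}" for \<omega> :: "'a \<times> nat \<Rightarrow> 'b"
  proof -
    have "{x\<in>?J. (if x \<in> ?J then \<omega> x else dflt) = i} = Pair S ` {k\<in>{..<m}. \<omega> (S, k) = i}"
      by auto
    then show ?thesis by (simp add: card_image inj_on_def)
  qed
  have "map_pmf (\<lambda>\<omega>. card {k\<in>{..<m}. \<omega> (S, k) = i}) (Pi_pmf (A \<times> {..<m}) dflt ?G)
      = map_pmf (\<lambda>\<omega>. card {x\<in>?J. \<omega> x = i})
          (map_pmf (\<lambda>f x. if x \<in> ?J then f x else dflt) (Pi_pmf (A \<times> {..<m}) dflt ?G))"
    by (simp only: pmf.map_comp o_def count_J)
  also have "\<dots> = map_pmf (\<lambda>\<omega>. card {x\<in>?J. \<omega> x = i}) (Pi_pmf ?J dflt ?G)"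
    using assms by (subst Pi_pmf_subset[symmetric]) auto
  also have "\<dots> = map_pmf (\<lambda>h. card {x\<in>?J. h x})
      (Pi_pmf ?J (dflt = i) (\<lambda>x. map_pmf (\<lambda>y. y = i) (?G x)))"
    by (subst Pi_pmf_map) (simp_all add: pmf.map_comp o_def)
  also have "\<dots> = map_pmf (\<lambda>h. card {x\<in>?J. h x})
      (Pi_pmf ?J (dflt = i) (\<lambda>_. bernoulli_pmf (pmf (F S) i)))"
    by (intro arg_cong[where f = "map_pmf _"] Pi_pmf_cong) (auto simp: map_pmf_eq_bernoulli_pmf)
  also have "\<dots> = binomial_pmf m (pmf (F S) i)"
    by (rule binomial_pmf_altdef'[symmetric]) (auto simp: pmf_le_1 card_cartesian_product)
  finally show ?thesis .
qed

section \<open>Nested logit choice probabilities\<close>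

locale nested_logit =
  fixes n :: nat and Ns :: "nat set set" and v :: "nat \<Rightarrow> real" and lam w :: "nat set \<Rightarrow> real"
  assumes partition: "is_partition Ns {1..n}"
    and item_weights_pos: "\<forall>i\<in>{1..n}. v i > 0"
    and lam_bounds: "\<forall>N\<in>Ns. 0 \<le> lam N \<and> lam N \<le> 1"
    and degenerate_nest_weights_pos: "\<forall>N\<in>Ns. lam N = 0 \<longrightarrow> w N > 0"
begin

lemma nests_cover: "\<Union>Ns = {1..n}"
  using partition unfolding is_partition_def by (elim conjE)

lemma nest_subset: "N \<in> Ns \<Longrightarrow> N \<subseteq> {1..n}"
  by (metis nests_cover Union_upper)

lemma nest_nonempty: "N \<in> Ns \<Longrightarrow> N \<noteq> {}"
  using partition unfolding is_partition_def by simp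

lemma finite_nests: "finite Ns"
  using nest_subset by (intro finite_subset[of Ns "Pow {1..n}"]) auto

lemma finite_nest: "N \<in> Ns \<Longrightarrow> finite N"
  using nest_subset finite_subset by blast

lemma nests_disjoint: "N \<in> Ns \<Longrightarrow> N' \<in> Ns \<Longrightarrow> N \<noteq> N' \<Longrightarrow> N \<inter> N' = {}"
  using partition unfolding is_partition_def by simp

lemma nest_of_eqI:
  assumes N: "N \<in> Ns" and i: "i \<in> N"
  shows "nest_of Ns i = N"
  unfolding nest_of_def
proof (rule the_equality)
  show "N \<in> Ns \<and> i \<in> N" using N i ..
  fix N' assume N': "N' \<in> Ns \<and> i \<in> N'"
  show "N' = N"
  proof (rule ccontr)
    assume "N' \<noteq> N"
    then have "N' \<inter> N = {}" using nests_disjoint N' N by blast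
    then show False using N' i by blast
  qed
qed

lemma nest_of_mem:
  assumes "i \<in> {1..n}"
  shows "nest_of Ns i \<in> Ns" "i \<in> nest_of Ns i"
proof -
  have "i \<in> \<Union>Ns" using nests_cover assms by simp
  then obtain N where "N \<in> Ns" "i \<in> N" by blast
  then show "nest_of Ns i \<in> Ns" "i \<in> nest_of Ns i"
    by (simp_all add: nest_of_eqI)
qed

lemma nest_val_nonneg: "N \<in> Ns \<Longrightarrow> 0 \<le> nest_val v lam w N S"
  using degenerate_nest_weights_pos unfolding nest_val_def by (auto simp: less_imp_le)

lemma nest_weight_sum_pos:
  assumes "N \<in> Ns" "S \<subseteq> {1..n}" "N \<inter> S \<noteq> {}"
  shows "0 < (\<Sum>j\<in>N \<inter> S. v j)"
  using assms item_weights_pos finite_nest by (intro sum_pos) auto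

lemma nest_weight_sum_mono:
  assumes "N \<in> Ns"
  shows "(\<Sum>j\<in>N \<inter> S. v j) \<le> (\<Sum>j\<in>N. v j)"
  using assms finite_nest nest_subset item_weights_pos
  by (intro sum_mono2) (auto simp: less_imp_le subset_iff)

definition nl_denom :: "nat set \<Rightarrow> real" where
  "nl_denom S = 1 + (\<Sum>N\<in>Ns. nest_val v lam w N S)"

lemma nl_denom_ge_1: "1 \<le> nl_denom S"
  unfolding nl_denom_def using nest_val_nonneg by (simp add: sum_nonneg)

lemma nl_phi_outside: "nl_phi Ns v lam w 0 S = 1 / nl_denom S"
  by (simp add: nl_phi_def nl_denom_def Let_def)

lemma nl_phi_item:
  assumes "N \<in> Ns" "i \<in> N" "i \<in> S"
  shows "nl_phi Ns v lam w i S = nest_val v lam w N S / nl_denom S * (v i / (\<Sum>j\<in>N \<inter> S. v j))"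
  using assms nest_subset[OF assms(1)] nest_of_eqI[OF assms(1,2)]
  by (auto simp: nl_phi_def nl_denom_def Let_def)

lemma nl_phi_nonneg:
  assumes S: "S \<subseteq> {1..n}"
  shows "0 \<le> nl_phi Ns v lam w i S"
proof (cases "i \<in> S")
  case True
  then have i: "i \<in> {1..n}" using S by auto
  note N = nest_of_mem[OF i]
  have "0 < (\<Sum>j\<in>nest_of Ns i \<inter> S. v j)"
    using nest_weight_sum_pos[OF N(1) S] N(2) True by blast
  then have "0 \<le> nest_val v lam w (nest_of Ns i) S / nl_denom S
      * (v i / (\<Sum>j\<in>nest_of Ns i \<inter> S. v j))"
    using nest_val_nonneg[OF N(1)] nl_denom_ge_1[of S] item_weights_pos i
    by (intro mult_nonneg_nonneg divide_nonneg_nonneg) (auto simp: less_imp_le)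
  then show ?thesis using nl_phi_item[OF N True] by simp
next
  case False
  then show ?thesis
    using nl_denom_ge_1[of S] by (cases "i = 0") (simp add: nl_phi_outside, simp add: nl_phi_def)
qed

lemma sum_nl_phi_nest:
  assumes "N \<in> Ns" "S \<subseteq> {1..n}"
  shows "(\<Sum>i\<in>N \<inter> S. nl_phi Ns v lam w i S) = nest_val v lam w N S / nl_denom S"
proof (cases "N \<inter> S = {}")
  case True
  then show ?thesis by (simp add: nest_val_def)
next
  case False
  have "(\<Sum>i\<in>N \<inter> S. nl_phi Ns v lam w i S)
      = (\<Sum>i\<in>N \<inter> S. nest_val v lam w N S / nl_denom S * (v i / (\<Sum>j\<in>N \<inter> S. v j)))"
    by (intro sum.cong refl nl_phi_item[OF assms(1)]) auto
  also have "\<dots> = nest_val v lam w N S / nl_denom S * ((\<Sum>i\<in>N \<inter> S. v i) / (\<Sum>j\<in>N \<inter> S. v j))"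
    by (simp only: sum_distrib_left sum_divide_distrib)
  finally show ?thesis
    using nest_weight_sum_pos[OF assms False] by simp
qed

lemma sum_nl_phi_eq_1:
  assumes S: "S \<subseteq> {1..n}"
  shows "(\<Sum>i\<in>insert 0 S. nl_phi Ns v lam w i S) = 1"
proof -
  have "S = (\<Union>N\<in>Ns. N \<inter> S)"
    using nests_cover S by auto
  then have "(\<Sum>i\<in>S. nl_phi Ns v lam w i S) = (\<Sum>i\<in>(\<Union>N\<in>Ns. N \<inter> S). nl_phi Ns v lam w i S)"
    by simp
  also have "\<dots> = (\<Sum>N\<in>Ns. \<Sum>i\<in>N \<inter> S. nl_phi Ns v lam w i S)"
    using finite_nests finite_nest nests_disjoint by (intro sum.UNION_disjoint) blast+
  also have "\<dots> = (\<Sum>N\<in>Ns. nest_val v lam w N S) / nl_denom S"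
    using S by (simp add: sum_nl_phi_nest sum_divide_distrib)
  finally have "(\<Sum>i\<in>S. nl_phi Ns v lam w i S) = (nl_denom S - 1) / nl_denom S"
    by (simp add: nl_denom_def)
  moreover have "0 \<notin> S" "finite S" using S finite_subset by auto
  ultimately show ?thesis
    using nl_denom_ge_1[of S] by (simp add: nl_phi_outside field_simps)
qed

lemma pmf_choice_pmf:
  assumes S: "S \<subseteq> {1..n}"
  shows "pmf (choice_pmf Ns v lam w S) i = nl_phi Ns v lam w i S"
  unfolding choice_pmf_def
proof (rule pmf_embed_pmf)
  have "finite S" using S finite_subset by blast
  then have "(\<integral>\<^sup>+ x. ennreal (nl_phi Ns v lam w x S) \<partial>count_space UNIV)
      = ennreal (\<Sum>x\<in>insert 0 S. nl_phi Ns v lam w x S)"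
    using nl_phi_nonneg[OF S]
    by (subst nn_integral_count_space') (auto simp: nl_phi_def Let_def sum_ennreal)
  then show "(\<integral>\<^sup>+ x. ennreal (nl_phi Ns v lam w x S) \<partial>count_space UNIV) = 1"
    by (simp add: sum_nl_phi_eq_1[OF S])
qed (rule nl_phi_nonneg[OF S])

lemma nest_val_mono:
  assumes N: "N \<in> Ns"
  shows "nest_val v lam w N S \<le> nest_val v lam w N {1..n}"
proof -
  have NS: "N \<inter> {1..n} = N" using nest_subset[OF N] by auto
  show ?thesis
  proof (cases "lam N = 0")
    case True
    then show ?thesis
      using nest_nonempty[OF N] degenerate_nest_weights_pos N NS by (auto simp: nest_val_def)
  next
    case False
    have "0 \<le> (\<Sum>i\<in>N \<inter> S. v i)"
      using nest_subset[OF N] item_weights_pos by (intro sum_nonneg) (auto simp: less_imp_le)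
    then show ?thesis
      using False lam_bounds N NS nest_weight_sum_mono[OF N, of S]
      by (simp add: nest_val_def powr_mono2)
  qed
qed

lemma nl_denom_mono: "nl_denom S \<le> nl_denom {1..n}"
  unfolding nl_denom_def using nest_val_mono by (simp add: sum_mono)

text \<open>Within a nest, \<open>v\<^sub>N(S) / (\<Sum>j\<in>N\<inter>S. v j) = (\<Sum>j\<in>N\<inter>S. v j) powr (\<lambda>\<^sub>N - 1)\<close>
  is antitone in the nest weight because \<open>\<lambda>\<^sub>N \<le> 1\<close>.\<close>
lemma nest_share_full_le:
  assumes N: "N \<in> Ns" and S: "S \<subseteq> {1..n}" and NS: "N \<inter> S \<noteq> {}"
  shows "nest_val v lam w N {1..n} / (\<Sum>j\<in>N. v j) \<le> nest_val v lam w N S / (\<Sum>j\<in>N \<inter> S. v j)"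
proof -
  have N_full: "N \<inter> {1..n} = N" using nest_subset[OF N] by auto
  have VS: "0 < (\<Sum>j\<in>N \<inter> S. v j)" using nest_weight_sum_pos[OF N S NS] .
  have VN: "0 < (\<Sum>j\<in>N. v j)"
    using nest_weight_sum_pos[OF N order.refl] N_full nest_nonempty[OF N] by simp
  note VSN = nest_weight_sum_mono[OF N, of S]
  show ?thesis
  proof (cases "lam N = 0")
    case True
    then show ?thesis
      using NS N_full nest_nonempty[OF N] degenerate_nest_weights_pos N VS VSN
      unfolding nest_val_def by (auto intro!: divide_left_mono)
  next
    case False
    have share: "x powr lam N / x = x powr (lam N - 1)" if "0 < x" for x :: real
      using that by (simp add: powr_diff)
    have "lam N - 1 \<le> 0" using lam_bounds N by auto
    then show ?thesis
      using False VS VN N_full powr_mono2'[OF _ VS VSN] by (simp add: nest_val_def share)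
  qed
qed

lemma nl_phi_full_le:
  assumes S: "S \<subseteq> {1..n}" and i: "i \<in> insert 0 S"
  shows "nl_phi Ns v lam w i {1..n} \<le> nl_phi Ns v lam w i S"
proof (cases "i = 0")
  case True
  then show ?thesis using nl_denom_mono[of S] nl_denom_ge_1[of S]
    by (simp add: nl_phi_outside frac_le)
next
  case False
  then have iS: "i \<in> S" and i1: "i \<in> {1..n}" using i S by auto
  define N where "N = nest_of Ns i"
  have N: "N \<in> Ns" "i \<in> N" using nest_of_mem[OF i1] by (simp_all add: N_def)
  have N_full: "N \<inter> {1..n} = N" using nest_subset[OF N(1)] by auto
  have vi: "0 < v i" using item_weights_pos i1 by blast
  have "nl_phi Ns v lam w i {1..n}
      = nest_val v lam w N {1..n} / (\<Sum>j\<in>N. v j) * v i / nl_denom {1..n}"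
    using nl_phi_item[OF N i1] N_full by simp
  also have "\<dots> \<le> nest_val v lam w N S / (\<Sum>j\<in>N \<inter> S. v j) * v i / nl_denom {1..n}"
    using nest_share_full_le[OF N(1) S] N iS vi nl_denom_ge_1[of "{1..n}"]
    by (intro divide_right_mono mult_right_mono) auto
  also have "\<dots> \<le> nest_val v lam w N S / (\<Sum>j\<in>N \<inter> S. v j) * v i / nl_denom S"
  proof (intro divide_left_mono)
    have "0 < (\<Sum>j\<in>N \<inter> S. v j)" using nest_weight_sum_pos[OF N(1) S] N(2) iS by blast
    then show "0 \<le> nest_val v lam w N S / (\<Sum>j\<in>N \<inter> S. v j) * v i"
      using nest_val_nonneg[OF N(1)] vi by simp
  qed (use nl_denom_ge_1[of S] nl_denom_mono[of S] in auto)
  also have "\<dots> = nl_phi Ns v lam w i S"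
    using nl_phi_item[OF N iS] by simp
  finally show ?thesis .
qed

end

section \<open>The two-proportion z-test\<close>

definition pooled_var :: "real \<Rightarrow> real \<Rightarrow> real \<Rightarrow> real \<Rightarrow> real" where
  "pooled_var x y x' y' =
     (x + x') / (x + y + x' + y') * ((y + y') / (x + y + x' + y')) * (1 / (x + y) + 1 / (x' + y'))"

lemma abs_zstat_le_iff:
  fixes x y x' y' L :: real
  assumes m: "m > 0" and pos: "x > 0" "y > 0" "x' > 0" "y' > 0" and L: "L \<ge> 0"
  shows "\<bar>zstat m x y x' y'\<bar> \<le> 8 * sqrt (3 * L)
     \<longleftrightarrow> (x / (x + y) - x' / (x' + y'))\<^sup>2 \<le> 24 * (8 * L / real m) * pooled_var x y x' y'"
proof -
  define V where "V = pooled_var x y x' y' / real m"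
  have V: "V > 0"
    using m pos unfolding V_def pooled_var_def
    by (intro divide_pos_pos mult_pos_pos add_pos_pos) auto
  have "zstat m x y x' y' = (x / (x + y) - x' / (x' + y')) / sqrt V"
    by (simp add: zstat_def V_def pooled_var_def divide_inverse algebra_simps)
  then have "\<bar>zstat m x y x' y'\<bar> \<le> 8 * sqrt (3 * L)
      \<longleftrightarrow> \<bar>x / (x + y) - x' / (x' + y')\<bar> \<le> \<bar>8 * sqrt (3 * L) * sqrt V\<bar>"
    using V L by (simp add: abs_divide pos_divide_le_eq abs_mult)
  also have "\<dots> \<longleftrightarrow> (x / (x + y) - x' / (x' + y'))\<^sup>2 \<le> (8 * sqrt (3 * L) * sqrt V)\<^sup>2"
    by (rule abs_le_square_iff)
  also have "(8 * sqrt (3 * L) * sqrt V)\<^sup>2 = 192 * L * V"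
    using V L by (simp add: power_mult_distrib)
  finally show ?thesis by (simp add: V_def)
qed

lemma relative_error_bounds:
  fixes a x E \<rho> :: real
  assumes "0 < \<rho>" "\<rho> \<le> a" "E \<le> \<rho> / 16" "(x - a)\<^sup>2 \<le> E * a"
  shows "3/4 * a \<le> x" "x \<le> 5/4 * a"
proof -
  have "E * a \<le> a / 16 * a"
    using assms by (intro mult_right_mono) auto
  also have "\<dots> = (a / 4)\<^sup>2"
    by (simp add: power2_eq_square)
  finally have "(x - a)\<^sup>2 \<le> (a / 4)\<^sup>2"
    using assms(4) by linarith
  then have "\<bar>x - a\<bar> \<le> a / 4"
    using assms(1,2) abs_le_square_iff[of "x - a" "a / 4"] by simp
  then show "3/4 * a \<le> x" "x \<le> 5/4 * a" by linarith+
qed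

lemma proportion_error_sq_le:
  fixes a c x y E :: real
  assumes pos: "a > 0" "c > 0" and t: "x + y \<ge> 3/4 * (a + c)" and E: "E \<ge> 0"
    and err: "(x - a)\<^sup>2 \<le> E * a" "(y - c)\<^sup>2 \<le> E * c"
  shows "(x / (x + y) - a / (a + c))\<^sup>2 \<le> 8/3 * E * (a / (a + c)) * (c / (a + c)) / (x + y)"
proof -
  define s where "s = a + c"
  define t where "t = x + y"
  have s: "s > 0" and t0: "t > 0" using pos t by (auto simp: s_def t_def)
  have "(x / t - a / s) * (t * s) = x * s - a * t"
    using s t0 by (simp add: left_diff_distrib)
  also have "\<dots> = (x - a) * c - a * (y - c)"
    by (simp add: s_def t_def algebra_simps)
  finally have "(x / t - a / s) * (t * s) = (x - a) * c - a * (y - c)" .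
  then have "(x / t - a / s)\<^sup>2 * (t\<^sup>2 * s\<^sup>2) = ((x - a) * c - a * (y - c))\<^sup>2"
    by (metis power_mult_distrib)
  also have "\<dots> \<le> 2 * ((x - a)\<^sup>2 * c\<^sup>2 + a\<^sup>2 * (y - c)\<^sup>2)"
    using sum_squares_ge_zero[of "(x - a) * c + a * (y - c)" 0]
    by (simp add: power2_eq_square algebra_simps)
  also have "\<dots> \<le> 2 * ((E * a) * c\<^sup>2 + a\<^sup>2 * (E * c))"
    using err by (intro mult_left_mono add_mono mult_right_mono) auto
  also have "\<dots> = 2 * E * a * c * s"
    by (simp add: s_def algebra_simps power2_eq_square)
  finally have "(x / t - a / s)\<^sup>2 \<le> 2 * E * a * c * s / (t\<^sup>2 * s\<^sup>2)"
    using s t0 by (simp add: pos_le_divide_eq)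
  also have "\<dots> = 2 * E * (a / s) * (c / s) * (s / t) / t"
    using s t0 by (simp add: field_simps power2_eq_square)
  also have "\<dots> \<le> 2 * E * (a / s) * (c / s) * (4/3) / t"
    using t s t0 pos E
    by (intro divide_right_mono mult_left_mono) (auto simp: s_def t_def field_simps)
  also have "\<dots> = 8/3 * E * (a / s) * (c / s) / t"
    by simp
  finally show ?thesis unfolding s_def t_def .
qed

lemma proportion_error_sq_le_uniform:
  fixes a c x y E \<rho> :: real
  assumes "\<rho> > 0" "a \<ge> \<rho>" "c \<ge> \<rho>" "x + y \<ge> 3/4 * (a + c)" "E \<ge> 0"
    "(x - a)\<^sup>2 \<le> E * a" "(y - c)\<^sup>2 \<le> E * c"
  shows "(x / (x + y) - a / (a + c))\<^sup>2 \<le> 4/9 * E / \<rho>"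
proof -
  define s where "s = a + c"
  have s: "s > 0" using assms by (simp add: s_def)
  have "3/2 * \<rho> \<le> 3/4 * (a + c)" using assms by simp
  then have t: "x + y \<ge> 3/2 * \<rho>" using assms by linarith
  have "4 * (a * c) \<le> s\<^sup>2"
    using sum_squares_ge_zero[of "a - c" 0] by (simp add: s_def power2_eq_square algebra_simps)
  then have "(a / s) * (c / s) \<le> 1/4"
    using s by (simp add: field_simps power2_eq_square)
  then have "8/3 * E * ((a / s) * (c / s)) \<le> 8/3 * E * (1/4)"
    using assms(5) by (intro mult_left_mono) auto
  then have "8/3 * E * (a / s) * (c / s) / (x + y) \<le> 8/3 * E * (1/4) / (3/2 * \<rho>)"
    using assms t by (intro frac_le) (auto simp: mult.assoc)
  then show ?thesis
    using proportion_error_sq_le[OF _ _ assms(4-7)] assms unfolding s_def by simp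
qed

lemma pooled_share_ge:
  fixes x x' T a a' s s' p :: real
  assumes "x + x' \<ge> 3/4 * (a + a')" "a = p * s" "a' = p * s'" "0 < T" "T \<le> 5/4 * (s + s')"
    "p \<ge> 0"
  shows "3/5 * p \<le> (x + x') / T"
proof -
  have "3/5 * p * T \<le> 3/5 * p * (5/4 * (s + s'))"
    using assms by (intro mult_left_mono) auto
  also have "\<dots> \<le> x + x'" using assms by (simp add: algebra_simps)
  finally show ?thesis using assms by (simp add: field_simps)
qed

lemma z_numerator_sq_le_of_proportions_eq:
  fixes a c a' c' x y x' y' E \<rho> :: real
  assumes \<rho>: "\<rho> > 0" "a \<ge> \<rho>" "c \<ge> \<rho>" "a' \<ge> \<rho>" "c' \<ge> \<rho>"
    and E: "E \<ge> 0" and E16: "E \<le> \<rho> / 16"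
    and err: "(x - a)\<^sup>2 \<le> E * a" "(y - c)\<^sup>2 \<le> E * c" "(x' - a')\<^sup>2 \<le> E * a'" "(y' - c')\<^sup>2 \<le> E * c'"
    and eq: "a / (a + c) = a' / (a' + c')"
  shows "(x / (x + y) - x' / (x' + y'))\<^sup>2 \<le> 24 * E * pooled_var x y x' y'"
proof -
  have pos: "a > 0" "c > 0" "a' > 0" "c' > 0" using \<rho> by auto
  note bounds =
    relative_error_bounds[OF \<rho>(1,2) E16 err(1)] relative_error_bounds[OF \<rho>(1,3) E16 err(2)]
    relative_error_bounds[OF \<rho>(1,4) E16 err(3)] relative_error_bounds[OF \<rho>(1,5) E16 err(4)]
  define p where "p = a / (a + c)"
  define q where "q = c / (a + c)"
  have pq: "p \<ge> 0" "q \<ge> 0" "a = p * (a + c)" "c = q * (a + c)"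
    "a' = p * (a' + c')" "c' = q * (a' + c')"
    using pos eq by (auto simp: p_def q_def field_simps)
  define t where "t = x + y"
  define t' where "t' = x' + y'"
  define T where "T = x + y + x' + y'"
  have t: "t \<ge> 3/4 * (a + c)" "t' \<ge> 3/4 * (a' + c')" "t > 0" "t' > 0"
    using bounds E \<rho> pos by (auto simp: t_def t'_def)
  have "(x / t - p)\<^sup>2 \<le> 8/3 * E * p * q / t"
    using proportion_error_sq_le[OF pos(1,2) _ E err(1,2)] t by (simp add: t_def p_def q_def)
  moreover have "(x' / t' - p)\<^sup>2 \<le> 8/3 * E * p * q / t'"
  proof -
    have "p = a' / (a' + c')" "q = c' / (a' + c')"
      using pq(5,6) pos by (simp_all add: field_simps)
    then show ?thesis
      using proportion_error_sq_le[OF pos(3,4) _ E err(3,4)] t by (simp add: t'_def)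
  qed
  moreover have "(x / t - x' / t')\<^sup>2 \<le> 2 * (x / t - p)\<^sup>2 + 2 * (x' / t' - p)\<^sup>2"
  proof -
    have "(X - Y)\<^sup>2 \<le> 2 * X\<^sup>2 + 2 * Y\<^sup>2" for X Y :: real
      using sum_squares_ge_zero[of "X + Y" 0] by (simp add: power2_eq_square algebra_simps)
    from this[of "x / t - p" "x' / t' - p"] show ?thesis by simp
  qed
  moreover have "16/3 * (p * q) * (E * (1 / t + 1 / t'))
      = 2 * (8/3 * E * p * q / t) + 2 * (8/3 * E * p * q / t')"
    by (simp add: distrib_left distrib_right mult_ac)
  ultimately have numerator: "(x / t - x' / t')\<^sup>2 \<le> 16/3 * (p * q) * (E * (1 / t + 1 / t'))"
    by linarith
  have T: "T > 0" "T \<le> 5/4 * ((a + c) + (a' + c'))"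
    using t(3,4) bounds(2,4,6,8) by (simp_all add: T_def t_def t'_def algebra_simps)
  have "3/4 * (a + a') \<le> x + x'" "3/4 * (c + c') \<le> y + y'"
    using bounds(1,3,5,7) by (simp_all add: algebra_simps)
  then have share: "3/5 * p \<le> (x + x') / T" "3/5 * q \<le> (y + y') / T"
    using pooled_share_ge[OF _ pq(3) pq(5) T pq(1)] pooled_share_ge[OF _ pq(4) pq(6) T pq(2)]
    by simp_all
  moreover have "0 \<le> (x + x') / T"
    using share(1) pq(1) by linarith
  ultimately have "9/25 * (p * q) \<le> (x + x') / T * ((y + y') / T)"
    using mult_mono[OF share] pq(2) by simp
  then have "16/3 * (p * q) \<le> 24 * ((x + x') / T * ((y + y') / T))"
    using mult_nonneg_nonneg[OF pq(1,2)] by linarith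
  then have "16/3 * (p * q) * (E * (1 / t + 1 / t'))
      \<le> 24 * ((x + x') / T * ((y + y') / T)) * (E * (1 / t + 1 / t'))"
    using E t by (intro mult_right_mono) auto
  moreover have "24 * E * pooled_var x y x' y'
      = 24 * ((x + x') / T * ((y + y') / T)) * (E * (1 / t + 1 / t'))"
    by (simp only: pooled_var_def T_def t_def t'_def mult_ac)
  ultimately show ?thesis
    using numerator unfolding t_def t'_def by linarith
qed

lemma z_numerator_sq_gt_of_proportion_gap:
  fixes a c a' c' x y x' y' E \<rho> \<Delta> :: real
  assumes \<rho>: "\<rho> > 0" "a \<ge> \<rho>" "c \<ge> \<rho>" "a' \<ge> \<rho>" "c' \<ge> \<rho>"
    and E: "E \<ge> 0" "300 * E \<le> 8 * \<rho> * \<Delta>\<^sup>2" and \<Delta>: "0 < \<Delta>" "\<Delta> \<le> 1"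
    and err: "(x - a)\<^sup>2 \<le> E * a" "(y - c)\<^sup>2 \<le> E * c" "(x' - a')\<^sup>2 \<le> E * a'" "(y' - c')\<^sup>2 \<le> E * c'"
    and gap: "\<bar>a / (a + c) - a' / (a' + c')\<bar> \<ge> \<Delta>"
  shows "(x / (x + y) - x' / (x' + y'))\<^sup>2 > 24 * E * pooled_var x y x' y'"
proof -
  have "8 * \<rho> * \<Delta>\<^sup>2 \<le> 8 * \<rho>"
    using \<rho> \<Delta> by (simp add: power_le_one)
  then have E16: "E \<le> \<rho> / 16" using E by linarith
  have pos: "a > 0" "c > 0" "a' > 0" "c' > 0" using \<rho> by auto
  note bounds =
    relative_error_bounds[OF \<rho>(1,2) E16 err(1)] relative_error_bounds[OF \<rho>(1,3) E16 err(2)]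
    relative_error_bounds[OF \<rho>(1,4) E16 err(3)] relative_error_bounds[OF \<rho>(1,5) E16 err(4)]
  define t where "t = x + y"
  define t' where "t' = x' + y'"
  define P where "P = (x + x') / (x + y + x' + y')"
  define Q where "Q = (y + y') / (x + y + x' + y')"
  have t: "t \<ge> 3/4 * (a + c)" "t' \<ge> 3/4 * (a' + c')" "t \<ge> 3/2 * \<rho>" "t' \<ge> 3/2 * \<rho>"
    using bounds E16 \<rho> by (auto simp: t_def t'_def)
  have "4/9 * E / \<rho> \<le> (\<Delta> / 8)\<^sup>2"
    using E \<rho> by (simp add: field_simps power2_eq_square)
  then have "(x / t - a / (a + c))\<^sup>2 \<le> (\<Delta> / 8)\<^sup>2" "(x' / t' - a' / (a' + c'))\<^sup>2 \<le> (\<Delta> / 8)\<^sup>2"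
    using proportion_error_sq_le_uniform[OF \<rho>(1,2,3) _ E(1) err(1,2)]
      proportion_error_sq_le_uniform[OF \<rho>(1,4,5) _ E(1) err(3,4)] t
    by (auto simp: t_def t'_def)
  moreover have "\<bar>X\<bar> \<le> \<Delta> / 8" if "X\<^sup>2 \<le> (\<Delta> / 8)\<^sup>2" for X :: real
    using that \<Delta> abs_le_square_iff[of X "\<Delta> / 8"] by simp
  ultimately have "\<bar>x / t - a / (a + c)\<bar> \<le> \<Delta> / 8" "\<bar>x' / t' - a' / (a' + c')\<bar> \<le> \<Delta> / 8"
    by blast+
  then have "3/4 * \<Delta> \<le> \<bar>x / t - x' / t'\<bar>"
    using gap by linarith
  then have numerator: "9/16 * \<Delta>\<^sup>2 \<le> (x / t - x' / t')\<^sup>2"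
    using \<Delta> power_mono[of "3/4 * \<Delta>" "\<bar>x / t - x' / t'\<bar>" 2]
    by (simp add: power_mult_distrib power_divide)
  have "P + Q = 1" "P \<ge> 0" "Q \<ge> 0"
    using bounds pos t by (auto simp: P_def Q_def t_def add_divide_distrib[symmetric])
  have PQ: "P * Q \<le> 1/4"
  proof -
    have "Q = 1 - P" using \<open>P + Q = 1\<close> by simp
    then show ?thesis
      using sum_squares_ge_zero[of "P - 1/2" 0]
      by (simp only:) (simp add: power2_eq_square algebra_simps)
  qed
  have "1 / t + 1 / t' \<le> 4 / (3 * \<rho>)"
    using t \<rho> frac_le[of 1 1 "3/2 * \<rho>" t] frac_le[of 1 1 "3/2 * \<rho>" t'] by simp
  then have "24 * E * (P * Q) * (1 / t + 1 / t') \<le> 24 * E * (1/4) * (4 / (3 * \<rho>))"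
    using PQ E t \<rho> \<open>P \<ge> 0\<close> \<open>Q \<ge> 0\<close> by (intro mult_mono) auto
  also have "\<dots> = 8 * E / \<rho>"
    using \<rho> by simp
  also have "\<dots> < 9/16 * \<Delta>\<^sup>2"
  proof -
    have "300 * E \<le> 8 * (\<Delta>\<^sup>2 * \<rho>)" "0 < \<Delta>\<^sup>2 * \<rho>"
      using E(2) \<rho>(1) \<Delta>(1) by (simp_all add: mult_ac)
    then have "8 * E < 9/16 * \<Delta>\<^sup>2 * \<rho>"
      by linarith
    then show ?thesis
      using \<rho>(1) by (simp add: pos_divide_less_eq)
  qed
  finally have "24 * E * (P * Q) * (1 / t + 1 / t') < 9/16 * \<Delta>\<^sup>2" .
  moreover have "24 * E * pooled_var x y x' y' = 24 * E * (P * Q) * (1 / t + 1 / t')"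
    by (simp only: pooled_var_def P_def Q_def t_def t'_def mult_ac)
  ultimately show ?thesis
    using numerator unfolding t_def t'_def by linarith
qed

lemma abs_zstat_le_iff_proportions_eq:
  fixes a c a' c' x y x' y' \<rho> \<Delta> L :: real
  assumes \<rho>: "\<rho> > 0" "a \<ge> \<rho>" "c \<ge> \<rho>" "a' \<ge> \<rho>" "c' \<ge> \<rho>"
    and L: "0 \<le> L" "300 * L \<le> real m * \<rho> * \<Delta>\<^sup>2" and m: "m > 0" and \<Delta>: "0 < \<Delta>" "\<Delta> \<le> 1"
    and err: "(x - a)\<^sup>2 \<le> 8 * L / m * a" "(y - c)\<^sup>2 \<le> 8 * L / m * c"
      "(x' - a')\<^sup>2 \<le> 8 * L / m * a'" "(y' - c')\<^sup>2 \<le> 8 * L / m * c'"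
    and gap: "a / (a + c) \<noteq> a' / (a' + c') \<Longrightarrow> \<bar>a / (a + c) - a' / (a' + c')\<bar> \<ge> \<Delta>"
  shows "\<bar>zstat m x y x' y'\<bar> \<le> 8 * sqrt (3 * L) \<longleftrightarrow> a / (a + c) = a' / (a' + c')"
proof -
  define E where "E = 8 * L / m"
  have "300 * E = 8 * (300 * L) / m"
    by (simp add: E_def)
  also have "\<dots> \<le> 8 * (real m * \<rho> * \<Delta>\<^sup>2) / m"
    using L(2) by (intro divide_right_mono) (auto simp: mult_ac)
  also have "\<dots> = 8 * \<rho> * \<Delta>\<^sup>2"
    using m by simp
  finally have E300: "300 * E \<le> 8 * \<rho> * \<Delta>\<^sup>2" .
  have E0: "0 \<le> E"
    using L(1) by (simp add: E_def)
  have "8 * \<rho> * \<Delta>\<^sup>2 \<le> 8 * \<rho>"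
    using \<rho> \<Delta> by (simp add: power_le_one)
  then have E16: "E \<le> \<rho> / 16"
    using E300 \<rho>(1) by linarith
  note err' = err[folded E_def]
  have "0 < x" "0 < y" "0 < x'" "0 < y'"
    using relative_error_bounds(1)[OF \<rho>(1,2) E16 err'(1)]
      relative_error_bounds(1)[OF \<rho>(1,3) E16 err'(2)]
      relative_error_bounds(1)[OF \<rho>(1,4) E16 err'(3)]
      relative_error_bounds(1)[OF \<rho>(1,5) E16 err'(4)] \<rho>
    by linarith+
  then have "\<bar>zstat m x y x' y'\<bar> \<le> 8 * sqrt (3 * L)
      \<longleftrightarrow> (x / (x + y) - x' / (x' + y'))\<^sup>2 \<le> 24 * E * pooled_var x y x' y'"
    using abs_zstat_le_iff[OF m _ _ _ _ L(1)] by (simp add: E_def)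
  also have "\<dots> \<longleftrightarrow> a / (a + c) = a' / (a' + c')"
  proof (cases "a / (a + c) = a' / (a' + c')")
    case True
    then show ?thesis
      using z_numerator_sq_le_of_proportions_eq[OF \<rho> E0 E16 err' True] by simp
  next
    case False
    then show ?thesis
      using z_numerator_sq_gt_of_proportion_gap[OF \<rho> E0 E300 \<Delta> err' gap[OF False]]
      by (simp add: not_le)
  qed
  finally show ?thesis .
qed

lemma divide_eq_divide_iff_proportions_eq:
  fixes a c a' c' :: real
  assumes "a > 0" "c > 0" "a' > 0" "c' > 0"
  shows "a / a' = c / c' \<longleftrightarrow> a / (a + c) = a' / (a' + c')"
  using assms by (simp add: field_simps)

section \<open>Correctness of the test on sampled data\<close>

context nested_logit
begin

lemma abs_z_test_le_iff_boost_eq: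
  assumes S: "S \<subseteq> {1..n}" and i: "i \<in> insert 0 S" and j: "j \<in> insert 0 S"
    and \<rho>: "\<rho> > 0" "\<forall>k\<in>insert 0 {1..n}. \<rho> \<le> nl_phi Ns v lam w k {1..n}"
    and L: "0 \<le> L" "300 * L \<le> real m * \<rho> * \<Delta>\<^sup>2" and m: "m > 0" and \<Delta>: "0 < \<Delta>" "\<Delta> \<le> 1"
    and accurate: "\<forall>T\<in>{S, {1..n}}. \<forall>k\<in>{i, j}.
      (emp_freq m \<omega> k T - nl_phi Ns v lam w k T)\<^sup>2 \<le> 8 * L / m * nl_phi Ns v lam w k T"
    and gap: "boost n Ns v lam w i S \<noteq> boost n Ns v lam w j S \<Longrightarrow>
      \<Delta> \<le> \<bar>nl_phi Ns v lam w i S / (nl_phi Ns v lam w i S + nl_phi Ns v lam w j S)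
        - nl_phi Ns v lam w i {1..n} / (nl_phi Ns v lam w i {1..n} + nl_phi Ns v lam w j {1..n})\<bar>"
  shows "\<bar>z_test n m \<omega> i j S\<bar> \<le> 8 * sqrt (3 * L) \<longleftrightarrow> boost n Ns v lam w i S = boost n Ns v lam w j S"
proof -
  have full: "\<rho> \<le> nl_phi Ns v lam w k {1..n}" "\<rho> \<le> nl_phi Ns v lam w k S" if "k \<in> insert 0 S" for k
  proof -
    have "k \<in> insert 0 {1..n}" using that S by auto
    then show "\<rho> \<le> nl_phi Ns v lam w k {1..n}" using \<rho>(2) by blast
    then show "\<rho> \<le> nl_phi Ns v lam w k S" using nl_phi_full_le[OF S that] by linarith
  qed
  have boost_iff: "boost n Ns v lam w i S = boost n Ns v lam w j S \<longleftrightarrow>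
      nl_phi Ns v lam w i S / (nl_phi Ns v lam w i S + nl_phi Ns v lam w j S)
      = nl_phi Ns v lam w i {1..n} / (nl_phi Ns v lam w i {1..n} + nl_phi Ns v lam w j {1..n})"
    unfolding boost_def
    using full[OF i] full[OF j] \<rho>(1) by (intro divide_eq_divide_iff_proportions_eq) auto
  have err:
    "(emp_freq m \<omega> i S - nl_phi Ns v lam w i S)\<^sup>2 \<le> 8 * L / m * nl_phi Ns v lam w i S"
    "(emp_freq m \<omega> j S - nl_phi Ns v lam w j S)\<^sup>2 \<le> 8 * L / m * nl_phi Ns v lam w j S"
    "(emp_freq m \<omega> i {1..n} - nl_phi Ns v lam w i {1..n})\<^sup>2
      \<le> 8 * L / m * nl_phi Ns v lam w i {1..n}"
    "(emp_freq m \<omega> j {1..n} - nl_phi Ns v lam w j {1..n})\<^sup>2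
      \<le> 8 * L / m * nl_phi Ns v lam w j {1..n}"
    using accurate by simp_all
  show ?thesis
    unfolding z_test_def boost_iff
    by (rule abs_zstat_le_iff_proportions_eq[OF \<rho>(1) full(2)[OF i] full(2)[OF j] full(1)[OF i]
          full(1)[OF j] L m \<Delta> err])
      (rule gap[unfolded boost_iff])
qed

lemma prob_emp_freq_deviates:
  assumes A: "finite A" "S \<in> A" "S \<subseteq> {1..n}"
    and E: "0 \<le> E" "E \<le> 4 * nl_phi Ns v lam w i S" and pos: "0 < nl_phi Ns v lam w i S"
  shows "measure_pmf.prob (sample_pmf A m Ns v lam w)
      {\<omega>. (emp_freq m \<omega> i S - nl_phi Ns v lam w i S)\<^sup>2 > E * nl_phi Ns v lam w i S}
    \<le> 2 * exp (- (real m * E / 8))"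
proof -
  let ?p = "nl_phi Ns v lam w i S"
  let ?count = "\<lambda>\<omega>. card {k\<in>{..<m}. \<omega> (S, k) = i}"
  have count: "map_pmf ?count (sample_pmf A m Ns v lam w) = binomial_pmf m ?p"
    using Pi_pmf_count_eq_binomial_pmf[OF A(1,2), of m i 0 "choice_pmf Ns v lam w"]
      pmf_choice_pmf[OF A(3)]
    by (simp add: sample_pmf_def)
  have "{\<omega>. (emp_freq m \<omega> i S - ?p)\<^sup>2 > E * ?p}
      = ?count -` {k. (real k / real m - ?p)\<^sup>2 > E * ?p}"
    by (simp add: emp_freq_def vimage_def)
  then have "measure_pmf.prob (sample_pmf A m Ns v lam w) {\<omega>. (emp_freq m \<omega> i S - ?p)\<^sup>2 > E * ?p}
      = measure_pmf.prob (binomial_pmf m ?p) {k. (real k / real m - ?p)\<^sup>2 > E * ?p}"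
    by (simp only: measure_map_pmf[symmetric] count)
  also have "\<dots> \<le> 2 * exp (- (real m * E / 8))"
    using pos E pmf_le_1[of "choice_pmf Ns v lam w S" i] pmf_choice_pmf[OF A(3)]
    by (intro prob_binomial_pmf_relative_deviation) auto
  finally show ?thesis .
qed

lemma prob_emp_freq_accurate:
  assumes A: "finite A" "\<forall>S\<in>A. S \<subseteq> {1..n}" and E: "0 \<le> E"
    and pos: "\<forall>S\<in>A. \<forall>i\<in>insert 0 S. 0 < nl_phi Ns v lam w i S \<and> E \<le> 4 * nl_phi Ns v lam w i S"
  shows "1 - real (card A * (n + 1)) * (2 * exp (- (real m * E / 8)))
    \<le> measure_pmf.prob (sample_pmf A m Ns v lam w)
        {\<omega>. \<forall>S\<in>A. \<forall>i\<in>insert 0 S.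
           (emp_freq m \<omega> i S - nl_phi Ns v lam w i S)\<^sup>2 \<le> E * nl_phi Ns v lam w i S}"
proof -
  let ?M = "sample_pmf A m Ns v lam w"
  let ?good = "{\<omega>. \<forall>S\<in>A. \<forall>i\<in>insert 0 S.
    (emp_freq m \<omega> i S - nl_phi Ns v lam w i S)\<^sup>2 \<le> E * nl_phi Ns v lam w i S}"
  define bad where "bad = (\<lambda>(S, i). {\<omega>.
    (emp_freq m \<omega> i S - nl_phi Ns v lam w i S)\<^sup>2 > E * nl_phi Ns v lam w i S})"
  define I where "I = Sigma A (insert 0)"
  have finite_sets: "finite S" if "S \<in> A" for S
    using A that finite_subset[OF _ finite_atLeastAtMost] by blast
  have finite_I: "finite I"
    using A finite_sets unfolding I_def by (intro finite_SigmaI) auto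
  have "card I = (\<Sum>S\<in>A. card (insert 0 S))"
    using A finite_sets unfolding I_def by (intro card_SigmaI) auto
  also have "\<dots> \<le> (\<Sum>S\<in>A. n + 1)"
  proof (intro sum_mono)
    fix S assume "S \<in> A"
    then have "card (insert 0 S) \<le> card (insert 0 {1..n})"
      using A by (intro card_mono) auto
    then show "card (insert 0 S) \<le> n + 1" by simp
  qed
  finally have card_I: "card I \<le> card A * (n + 1)" by simp
  have "measure_pmf.prob ?M (UNIV - ?good) = measure_pmf.prob ?M (\<Union>x\<in>I. bad x)"
    by (intro arg_cong[where f = "measure_pmf.prob ?M"]) (force simp: I_def bad_def not_le)
  also have "\<dots> \<le> (\<Sum>x\<in>I. measure_pmf.prob ?M (bad x))"
    by (rule measure_pmf.finite_measure_subadditive_finite[OF finite_I]) auto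
  also have "\<dots> \<le> (\<Sum>x\<in>I. 2 * exp (- (real m * E / 8)))"
  proof (intro sum_mono)
    fix x assume "x \<in> I"
    then obtain S i where x: "x = (S, i)" "S \<in> A" "i \<in> insert 0 S" by (auto simp: I_def)
    moreover have "S \<subseteq> {1..n}" using A x by blast
    ultimately show "measure_pmf.prob ?M (bad x) \<le> 2 * exp (- (real m * E / 8))"
      unfolding bad_def using E pos by (auto intro!: prob_emp_freq_deviates[OF A(1)])
  qed
  also have "\<dots> = real (card I) * (2 * exp (- (real m * E / 8)))"
    by simp
  also have "\<dots> \<le> real (card A * (n + 1)) * (2 * exp (- (real m * E / 8)))"
    by (intro mult_right_mono of_nat_mono card_I) simp
  finally show ?thesis
    using measure_pmf.prob_compl[of ?good ?M] by (simp add: Compl_eq_Diff_UNIV)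
qed

lemma prob_all_z_tests_correct:
  assumes Ss: "finite Ss" "\<forall>S\<in>Ss. S \<subseteq> {1..n}"
    and \<rho>: "\<rho> > 0" "\<forall>k\<in>insert 0 {1..n}. \<rho> \<le> nl_phi Ns v lam w k {1..n}"
    and \<Delta>: "0 < \<Delta>" "\<Delta> \<le> 1" and L: "0 < L" "300 * L \<le> real m * \<rho> * \<Delta>\<^sup>2"
    and gap: "\<forall>S\<in>Ss. \<forall>i\<in>insert 0 S. \<forall>j\<in>insert 0 S.
      boost n Ns v lam w i S \<noteq> boost n Ns v lam w j S \<longrightarrow>
      \<Delta> \<le> \<bar>nl_phi Ns v lam w i S / (nl_phi Ns v lam w i S + nl_phi Ns v lam w j S)
        - nl_phi Ns v lam w i {1..n} / (nl_phi Ns v lam w i {1..n} + nl_phi Ns v lam w j {1..n})\<bar>"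
  shows "1 - real ((card Ss + 1) * (n + 1)) * (2 * exp (- L))
    \<le> measure_pmf.prob (sample_pmf (insert {1..n} Ss) m Ns v lam w)
        {\<omega>. \<forall>S\<in>Ss. \<forall>i\<in>insert 0 S. \<forall>j\<in>insert 0 S.
           (\<bar>z_test n m \<omega> i j S\<bar> \<le> 8 * sqrt (3 * L) \<longleftrightarrow>
            boost n Ns v lam w i S = boost n Ns v lam w j S)}"
proof -
  let ?A = "insert {1..n} Ss" and ?\<phi> = "\<lambda>i S. nl_phi Ns v lam w i S"
  have m: "m > 0"
    using L \<rho> \<Delta> by (cases "m = 0") auto
  define E where "E = 8 * L / m"
  let ?good = "{\<omega>. \<forall>S\<in>?A. \<forall>i\<in>insert 0 S. (emp_freq m \<omega> i S - ?\<phi> i S)\<^sup>2 \<le> E * ?\<phi> i S}"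
  have "real m * \<rho> * \<Delta>\<^sup>2 \<le> real m * \<rho>"
    using \<rho> \<Delta> by (intro mult_left_le) (auto simp: power_le_one)
  then have "8 * L \<le> 4 * (real m * \<rho>)"
    using L by linarith
  then have E: "0 \<le> E" "E \<le> 4 * \<rho>"
    using L m by (simp_all add: E_def pos_divide_le_eq mult_ac)
  have \<rho>_le: "\<rho> \<le> ?\<phi> i S" if "S \<in> ?A" "i \<in> insert 0 S" for S i
  proof -
    have S: "S \<subseteq> {1..n}" using that(1) Ss by auto
    then have "\<rho> \<le> ?\<phi> i {1..n}" using that(2) \<rho>(2) by blast
    then show ?thesis using nl_phi_full_le[OF S that(2)] by linarith
  qed
  have pos: "\<forall>S\<in>?A. \<forall>i\<in>insert 0 S. 0 < ?\<phi> i S \<and> E \<le> 4 * ?\<phi> i S"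
  proof (intro ballI conjI)
    fix S i assume "S \<in> ?A" "i \<in> insert 0 S"
    then have "\<rho> \<le> ?\<phi> i S" by (rule \<rho>_le)
    then show "0 < ?\<phi> i S" "E \<le> 4 * ?\<phi> i S" using \<rho>(1) E(2) by linarith+
  qed
  have "card ?A \<le> card Ss + 1" using Ss(1) by (simp add: card_insert_if)
  moreover have "real m * E / 8 = L" using m by (simp add: E_def)
  ultimately have "1 - real ((card Ss + 1) * (n + 1)) * (2 * exp (- L))
      \<le> 1 - real (card ?A * (n + 1)) * (2 * exp (- (real m * E / 8)))"
    by (simp only:) (intro diff_left_mono mult_right_mono of_nat_mono mult_le_mono1, simp_all)
  also have "\<dots> \<le> measure_pmf.prob (sample_pmf ?A m Ns v lam w) ?good"
    using Ss E(1) pos by (intro prob_emp_freq_accurate) auto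
  also have "\<dots> \<le> measure_pmf.prob (sample_pmf ?A m Ns v lam w)
      {\<omega>. \<forall>S\<in>Ss. \<forall>i\<in>insert 0 S. \<forall>j\<in>insert 0 S.
         (\<bar>z_test n m \<omega> i j S\<bar> \<le> 8 * sqrt (3 * L) \<longleftrightarrow>
          boost n Ns v lam w i S = boost n Ns v lam w j S)}"
  proof (intro measure_pmf.finite_measure_mono subsetI CollectI ballI)
    fix \<omega> S i j
    assume good: "\<omega> \<in> ?good" and S: "S \<in> Ss" and i: "i \<in> insert 0 S" and j: "j \<in> insert 0 S"
    have acc: "(emp_freq m \<omega> k T - ?\<phi> k T)\<^sup>2 \<le> 8 * L / m * ?\<phi> k T"
      if "T \<in> ?A" "k \<in> insert 0 T" for k T
      using good that unfolding E_def by blast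
    have S_sub: "S \<subseteq> {1..n}" using S Ss by blast
    then have "i \<in> insert 0 {1..n}" "j \<in> insert 0 {1..n}" using i j by auto
    then have "\<forall>T\<in>{S, {1..n}}. \<forall>k\<in>{i, j}. (emp_freq m \<omega> k T - ?\<phi> k T)\<^sup>2 \<le> 8 * L / m * ?\<phi> k T"
      using acc S i j by simp
    with S_sub show "\<bar>z_test n m \<omega> i j S\<bar> \<le> 8 * sqrt (3 * L) \<longleftrightarrow>
        boost n Ns v lam w i S = boost n Ns v lam w j S"
      using S i j gap L(1)
      by (intro abs_z_test_le_iff_boost_eq[OF _ i j \<rho> _ L(2) m \<Delta>]) (auto simp: less_imp_le)
  qed auto
  finally show ?thesis .
qed

lemma prob_all_z_tests_correct_confidence:
  assumes Ss: "finite Ss" "\<forall>S\<in>Ss. S \<subseteq> {1..n}"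
    and \<rho>: "\<rho> \<in> {0<..<1}" "\<forall>k\<in>insert 0 {1..n}. \<rho> \<le> nl_phi Ns v lam w k {1..n}"
    and \<Delta>: "\<Delta> \<in> {0<..<1}" and \<delta>: "\<delta> \<in> {0<..<1}"
    and K: "real (card Ss + 1) * real (n + 1) \<le> K"
    and sample_size: "300 * ln (2 * K / \<delta>) / (\<rho> * \<Delta>\<^sup>2) \<le> real m"
    and gap: "\<forall>S\<in>Ss. \<forall>i\<in>insert 0 S. \<forall>j\<in>insert 0 S.
      boost n Ns v lam w i S \<noteq> boost n Ns v lam w j S \<longrightarrow>
      \<Delta> \<le> \<bar>nl_phi Ns v lam w i S / (nl_phi Ns v lam w i S + nl_phi Ns v lam w j S)
        - nl_phi Ns v lam w i {1..n} / (nl_phi Ns v lam w i {1..n} + nl_phi Ns v lam w j {1..n})\<bar>"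
  shows "1 - \<delta> \<le> measure_pmf.prob (sample_pmf (insert {1..n} Ss) m Ns v lam w)
    {\<omega>. \<forall>S\<in>Ss. \<forall>i\<in>insert 0 S. \<forall>j\<in>insert 0 S.
       (\<bar>z_test n m \<omega> i j S\<bar> \<le> 8 * sqrt (3 * ln (2 * K / \<delta>)) \<longleftrightarrow>
        boost n Ns v lam w i S = boost n Ns v lam w j S)}"
proof -
  define L where "L = ln (2 * K / \<delta>)"
  have "1 * 1 \<le> real (card Ss + 1) * real (n + 1)"
    by (intro mult_mono) auto
  then have K_pos: "1 \<le> K"
    using K by linarith
  then have "1 < 2 * K / \<delta>"
    using \<delta> by (simp add: less_divide_eq)
  then have L: "0 < L" and exp_L: "2 * exp (- L) = \<delta> / K"
    using \<delta> by (simp_all add: L_def exp_minus)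
  have "0 < \<rho> * \<Delta>\<^sup>2"
    using \<rho> \<Delta> by simp
  then have "300 * L \<le> real m * \<rho> * \<Delta>\<^sup>2"
    using sample_size by (simp add: L_def pos_divide_le_eq mult.assoc)
  note all_correct = prob_all_z_tests_correct[OF Ss _ \<rho>(2) _ _ L this gap]
  have "real ((card Ss + 1) * (n + 1)) * (\<delta> / K) \<le> K * (\<delta> / K)"
    using K K_pos \<delta> by (intro mult_right_mono) (simp_all only: of_nat_mult, simp)
  then have "1 - \<delta> \<le> 1 - real ((card Ss + 1) * (n + 1)) * (2 * exp (- L))"
    using K_pos unfolding exp_L by simp
  also have "\<dots> \<le> measure_pmf.prob (sample_pmf (insert {1..n} Ss) m Ns v lam w)
    {\<omega>. \<forall>S\<in>Ss. \<forall>i\<in>insert 0 S. \<forall>j\<in>insert 0 S.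
       (\<bar>z_test n m \<omega> i j S\<bar> \<le> 8 * sqrt (3 * L) \<longleftrightarrow>
        boost n Ns v lam w i S = boost n Ns v lam w j S)}"
    using \<rho> \<Delta> by (intro all_correct) auto
  finally show ?thesis
    unfolding L_def .
qed

end

lemma design_subset: "S \<in> design n b code \<Longrightarrow> S \<subseteq> {1..n}"
  by (auto simp: design_def S_minus_def)

lemma finite_design: "finite (design n b code)"
  by (rule finite_subset[of _ "Pow {1..n}"]) (use design_subset in blast, simp)

theorem theorem4p6:
  "\<exists>C::real. \<forall>(n::nat) (b::nat) (code::nat \<Rightarrow> nat list) (Ns::nat set set)
      (v::nat \<Rightarrow> real) (lam::nat set \<Rightarrow> real) (w::nat set \<Rightarrow> real)
      (\<rho>::real) (\<Delta>::real) (\<delta>::real) (m::nat).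
    n \<ge> 2 \<longrightarrow> b \<ge> 2 \<longrightarrow>
    (\<forall>i\<in>{1..n}. length (code i) = num_levels b n \<and> set (code i) \<subseteq> {..<b}) \<longrightarrow>
    inj_on code {1..n} \<longrightarrow>
    is_partition Ns {1..n} \<longrightarrow>
    (\<forall>i\<in>{1..n}. v i > 0) \<longrightarrow>
    (\<forall>N\<in>Ns. 0 \<le> lam N \<and> lam N \<le> 1) \<longrightarrow>
    (\<forall>N\<in>Ns. lam N = 0 \<longrightarrow> w N > 0) \<longrightarrow>
    \<rho> \<in> {0<..<1} \<longrightarrow> \<Delta> \<in> {0<..<1} \<longrightarrow> \<delta> \<in> {0<..<1} \<longrightarrow>
    (\<forall>i\<in>insert 0 {1..n}. nl_phi Ns v lam w i {1..n} \<ge> \<rho>) \<longrightarrow>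
    (\<forall>S\<in>design n b code. \<forall>i\<in>insert 0 S. \<forall>j\<in>insert 0 S.
        boost n Ns v lam w i S \<noteq> boost n Ns v lam w j S \<longrightarrow>
        \<bar>nl_phi Ns v lam w i S / (nl_phi Ns v lam w i S + nl_phi Ns v lam w j S)
          - nl_phi Ns v lam w i {1..n} / (nl_phi Ns v lam w i {1..n} + nl_phi Ns v lam w j {1..n})\<bar>
          \<ge> \<Delta>) \<longrightarrow>
    (let K = real (card (design n b code) + 1) * (real (n + 1) + real ((n + 1) choose 2)) in
     real m \<ge> 3 * C\<^sup>2 * ln (2 * K / \<delta>) / (\<rho> * \<Delta>\<^sup>2) \<longrightarrow>
     measure_pmf.prob (sample_pmf (insert {1..n} (design n b code)) m Ns v lam w)
       {\<omega>. \<forall>S\<in>design n b code. \<forall>i\<in>insert 0 S. \<forall>j\<in>insert 0 S.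
            (\<bar>z_test n m \<omega> i j S\<bar> \<le> 8 * sqrt (3 * ln (2 * K / \<delta>)) \<longleftrightarrow>
             boost n Ns v lam w i S = boost n Ns v lam w j S)}
       \<ge> 1 - \<delta>)"
proof (rule exI[of _ 10], intro allI impI, unfold Let_def, intro impI, goal_cases)
  case (1 n b code Ns v lam w \<rho> \<Delta> \<delta> m)
  \<comment> \<open>Of the design only finiteness and \<open>S \<subseteq> {1..n}\<close> matter.\<close>
  interpret nested_logit n Ns v lam w
    using 1 by unfold_locales auto
  have "real (card (design n b code) + 1) * real (n + 1)
      \<le> real (card (design n b code) + 1) * (real (n + 1) + real ((n + 1) choose 2))"
    by (intro mult_left_mono) auto
  then show ?case
    using 1 finite_design design_subset by (intro prob_all_z_tests_correct_confidence) auto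
qed

end
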